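(* For a multi-unit auction with $m\ge2$ identical items and $n\ge2$ unknown single-minded bidders, no randomized mechanism that is (universally) obviously strategy-proof and satisfies individual rationality and no negative transfers has approximation better than $\frac{6}{5}$; i.e., every such mechanism has $\sup_v\mathrm{OPT}(v)/\mathbb{E}[W(v)]\ge 6/5$.
   Context: A multi-unit auction: bidder $i$'s valuation is $v_i:\{0,\dots,m\}\to\mathbb{R}_{\ge0}$. It is single-minded if there are $x_i\ge0$, $d_i\in\{1,\dots,m\}$ with $v_i(q)=x_i$ for $q\ge d_i$ and $0$ otherwise; unknown single-minded means both $x_i,d_i$ are private, so the domain $V_i$ is all single-minded valuations. Utilities are quasi-linear. A deterministic mechanism is a rooted tree: each internal node is assigned to one bidder, who sends one of the messages labeling the outgoing edges; each leaf is labeled with a feasible allocation (quantities summing to at most $m$) and a payment for each bidder. A behavior $B_i$ specifies a message at every node of bidder $i$; a profile $B$ determines a path $\mathrm{Path}(B)$ with allocation $f_i(B)$ and payment $p_i(B)$ for $i$. A strategy $\mathcal S_i$ maps each $v_i\in V_i$ to a behavior; it is obviously dominant if for every $v_i\in V_i$, every node $u$ of $i$, every $B_{-i}$ and every profile $B'$ with $u\in\mathrm{Path}(\mathcal S_i(v_i),B_{-i})\cap\mathrm{Path}(B')$ and $B'_i$ sending at $u$ a message different from $\mathcal S_i(v_i)$'s, $v_i(f_i(\mathcal S_i(v_i),B_{-i}))-p_i(\mathcal S_i(v_i),B_{-i})\ge v_i(f_i(B'))-p_i(B')$. A randomized mechanism is a probability distribution over deterministic mechanisms each with strategies; it is universally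 OSP if each mechanism in its support is OSP. Individual rationality: in every mechanism of the support and for every profile in $\prod_iV_i$, following the strategies yields each bidder utility $\ge0$. No negative transfers: all payments at all leaves of all mechanisms in the support are $\ge0$. $\mathbb{E}[W(v)]$ is the expected welfare when bidders follow their strategies on profile $v$; $\mathrm{OPT}(v)$ is the optimal welfare. *)

theory Defs
  imports "HOL-Probability.Probability"
begin

(* Bidders are 0..<n.  A single-minded valuation is a function nat => real. *)
definition single_minded :: "nat \<Rightarrow> (nat \<Rightarrow> real) \<Rightarrow> bool" where
  "single_minded m v \<longleftrightarrow>
     (\<exists>x d. x \<ge> 0 \<and> 1 \<le> d \<and> d \<le> m \<and> (\<forall>q. v q = (if d \<le> q then x else 0)))"

(* Deterministic mechanism: a (well-founded, arbitrarily branching) tree.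
   Leaf f p: allocation f i and payment p i for bidder i.
   Node i Ms c: bidder i sends a message x \<in> Ms, and the game continues at c x. *)
datatype 'msg mech = Leaf "nat \<Rightarrow> nat" "nat \<Rightarrow> real" | Node nat "'msg set" "'msg \<Rightarrow> 'msg mech"

(* nodes are identified by their address = the message history from the root *)
type_synonym 'msg behavior = "'msg list \<Rightarrow> 'msg"
type_synonym 'msg profile = "nat \<Rightarrow> 'msg behavior"
type_synonym 'msg strategy = "nat \<Rightarrow> (nat \<Rightarrow> real) \<Rightarrow> 'msg behavior"

primrec subtree :: "'msg mech \<Rightarrow> 'msg list \<Rightarrow> 'msg mech option" where
  "subtree T [] = Some T"
| "subtree T (x # u) = (case T of Leaf f p \<Rightarrow> None
                          | Node i Ms c \<Rightarrow> if x \<in> Ms then subtree (c x) u else None)"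

primrec outcome :: "'msg mech \<Rightarrow> 'msg profile \<Rightarrow> 'msg list \<Rightarrow> (nat \<Rightarrow> nat) \<times> (nat \<Rightarrow> real)" where
  "outcome (Leaf f p) B h = (f, p)"
| "outcome (Node i Ms c) B h = outcome (c (B i h)) B (h @ [B i h])"

primrec path :: "'msg mech \<Rightarrow> 'msg profile \<Rightarrow> 'msg list \<Rightarrow> 'msg list set" where
  "path (Leaf f p) B h = {h}"
| "path (Node i Ms c) B h = insert h (path (c (B i h)) B (h @ [B i h]))"

definition owner_at :: "'msg mech \<Rightarrow> 'msg list \<Rightarrow> nat \<Rightarrow> bool" where
  "owner_at T u i \<longleftrightarrow> (\<exists>Ms c. subtree T u = Some (Node i Ms c))"

definition valid_behavior :: "'msg mech \<Rightarrow> nat \<Rightarrow> 'msg behavior \<Rightarrow> bool" where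
  "valid_behavior T i b \<longleftrightarrow> (\<forall>u Ms c. subtree T u = Some (Node i Ms c) \<longrightarrow> b u \<in> Ms)"

definition valid_profile :: "nat \<Rightarrow> 'msg mech \<Rightarrow> 'msg profile \<Rightarrow> bool" where
  "valid_profile n T B \<longleftrightarrow> (\<forall>j<n. valid_behavior T j (B j))"

definition wf_mech :: "nat \<Rightarrow> nat \<Rightarrow> 'msg mech \<Rightarrow> bool" where
  "wf_mech n m T \<longleftrightarrow>
     (\<forall>u i Ms c. subtree T u = Some (Node i Ms c) \<longrightarrow> i < n \<and> Ms \<noteq> {}) \<and>
     (\<forall>u f p. subtree T u = Some (Leaf f p) \<longrightarrow> (\<Sum>i<n. f i) \<le> m)"

definition util :: "(nat \<Rightarrow> real) \<Rightarrow> 'msg mech \<Rightarrow> 'msg profile \<Rightarrow> nat \<Rightarrow> real" where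
  "util v T B i = v (fst (outcome T B []) i) - snd (outcome T B []) i"

definition valid_strategies :: "nat \<Rightarrow> nat \<Rightarrow> 'msg mech \<Rightarrow> 'msg strategy \<Rightarrow> bool" where
  "valid_strategies n m T S \<longleftrightarrow>
     (\<forall>i<n. \<forall>v. single_minded m v \<longrightarrow> valid_behavior T i (S i v))"

definition osp :: "nat \<Rightarrow> nat \<Rightarrow> 'msg mech \<Rightarrow> 'msg strategy \<Rightarrow> bool" where
  "osp n m T S \<longleftrightarrow>
     (\<forall>i<n. \<forall>v. single_minded m v \<longrightarrow>
        (\<forall>u. owner_at T u i \<longrightarrow>
          (\<forall>B B'. valid_profile n T B \<longrightarrow> valid_profile n T B' \<longrightarrow>
             u \<in> path T (B(i := S i v)) [] \<longrightarrow> u \<in> path T B' [] \<longrightarrow>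
             B' i u \<noteq> S i v u \<longrightarrow>
             util v T B' i \<le> util v T (B(i := S i v)) i)))"

definition play :: "'msg strategy \<Rightarrow> (nat \<Rightarrow> nat \<Rightarrow> real) \<Rightarrow> 'msg profile" where
  "play S vs = (\<lambda>j. S j (vs j))"

definition indiv_rational :: "nat \<Rightarrow> nat \<Rightarrow> 'msg mech \<Rightarrow> 'msg strategy \<Rightarrow> bool" where
  "indiv_rational n m T S \<longleftrightarrow>
     (\<forall>vs. (\<forall>i<n. single_minded m (vs i)) \<longrightarrow> (\<forall>i<n. util (vs i) T (play S vs) i \<ge> 0))"

definition no_negative_transfers :: "nat \<Rightarrow> 'msg mech \<Rightarrow> bool" where
  "no_negative_transfers n T \<longleftrightarrow>
     (\<forall>u f p. subtree T u = Some (Leaf f p) \<longrightarrow> (\<forall>i<n. p i \<ge> 0))"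

definition good_mech :: "nat \<Rightarrow> nat \<Rightarrow> 'msg mech \<Rightarrow> 'msg strategy \<Rightarrow> bool" where
  "good_mech n m T S \<longleftrightarrow> wf_mech n m T \<and> valid_strategies n m T S \<and> osp n m T S \<and>
     indiv_rational n m T S \<and> no_negative_transfers n T"

definition welfare :: "nat \<Rightarrow> 'msg mech \<Rightarrow> 'msg strategy \<Rightarrow> (nat \<Rightarrow> nat \<Rightarrow> real) \<Rightarrow> real" where
  "welfare n T S vs = (\<Sum>i<n. vs i (fst (outcome T (play S vs) []) i))"

definition opt :: "nat \<Rightarrow> nat \<Rightarrow> (nat \<Rightarrow> nat \<Rightarrow> real) \<Rightarrow> real" where
  "opt n m vs = Sup {\<Sum>i<n. vs i (q i) | q. (\<Sum>i<n. q i) \<le> m}"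

end

(* Play five two-bidder profiles, all other bidders having the zero valuation: two unit
   bidders of value 1; a unit bidder of value u against a bidder wanting all m units at
   value g, in both orders; and a bidder wanting m units at value \<gamma> against a unit bidder
   of value 1, in both orders, where 1 < \<gamma> < u < g.  A deterministic OSP, individually
   rational mechanism without negative transfers cannot be efficient on all five: at the
   first node where the five plays part, its owner is bidder 0 or 1, and the unit type of
   value u, which wins nothing when the other bidder takes all m units, would prefer to
   pose as the unit type of value 1, as the type (\<gamma>, m), or as the type (g, m); in the
   last case OSP for the type (g, m) keeps its price below \<gamma> < u.  With \<gamma> = K, u = K + 1,
   g = K (K + 1) and suitable weights, the normalised welfares of every such mechanism
   therefore average to at most 5/6 + 1/(6K); averaging over the random mechanism, some
   profile has expected welfare at most that fraction of the optimum, and K \<rightarrow> \<infinity>. *)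

theory Submission
  imports Defs
begin

(* outcome and path follow the messages of B even where they are not in Ms, subtree does not *)
definition legal_from :: "'msg mech \<Rightarrow> 'msg profile \<Rightarrow> 'msg list \<Rightarrow> bool" where
  "legal_from T B h \<longleftrightarrow> (\<forall>u i Ms c. subtree T u = Some (Node i Ms c) \<longrightarrow> B i (h @ u) \<in> Ms)"

lemma legal_from_Node:
  assumes "legal_from (Node i Ms c) B h"
  shows "B i h \<in> Ms" and "legal_from (c (B i h)) B (h @ [B i h])"
proof -
  show msg: "B i h \<in> Ms"
    using assms unfolding legal_from_def by (metis append_Nil2 subtree.simps(1))
  show "legal_from (c (B i h)) B (h @ [B i h])"
    unfolding legal_from_def
  proof (intro allI impI)
    fix u j Ms' c' assume "subtree (c (B i h)) u = Some (Node j Ms' c')"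
    then have "subtree (Node i Ms c) (B i h # u) = Some (Node j Ms' c')"
      using msg by simp
    then show "B j ((h @ [B i h]) @ u) \<in> Ms'"
      using assms unfolding legal_from_def by fastforce
  qed
qed

lemma legal_from_valid_profile:
  "wf_mech n m T \<Longrightarrow> valid_profile n T B \<Longrightarrow> legal_from T B []"
  unfolding legal_from_def wf_mech_def valid_profile_def valid_behavior_def by auto

lemma outcome_is_leaf:
  "legal_from T B h \<Longrightarrow> outcome T B h = (f, p) \<Longrightarrow> \<exists>u. subtree T u = Some (Leaf f p)"
proof (induction T arbitrary: h)
  case (Leaf f' p')
  then show ?case by (intro exI[of _ "[]"]) simp
next
  case (Node i Ms c)
  let ?x = "B i h"
  have "?x \<in> Ms" "legal_from (c ?x) B (h @ [?x])"
    using legal_from_Node[OF Node.prems(1)] by auto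
  moreover obtain u where "subtree (c ?x) u = Some (Leaf f p)"
    using Node.IH[OF rangeI \<open>legal_from (c ?x) B (h @ [?x])\<close>] Node.prems(2) by auto
  ultimately show ?case by (intro exI[of _ "?x # u"]) simp
qed

lemma common_outcome_or_divergence:
  assumes "\<forall>B\<in>Bs. legal_from T B h"
  shows "(\<exists>r. \<forall>B\<in>Bs. outcome T B h = r) \<or>
    (\<exists>u i Ms c. subtree T u = Some (Node i Ms c) \<and> (\<forall>B\<in>Bs. h @ u \<in> path T B h) \<and>
       (\<exists>B\<in>Bs. \<exists>B'\<in>Bs. B i (h @ u) \<noteq> B' i (h @ u)))"
  using assms
proof (induction T arbitrary: h)
  case (Leaf f p)
  then show ?case by auto
next
  case (Node i Ms c)
  show ?case
  proof (cases "\<exists>B\<in>Bs. \<exists>B'\<in>Bs. B i h \<noteq> B' i h")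
    case True
    then show ?thesis by (intro disjI2 exI[of _ "[]"]) auto
  next
    case False
    show ?thesis
    proof (cases "Bs = {}")
      case False
      then obtain B0 where "B0 \<in> Bs" by blast
      define x where "x = B0 i h"
      have same: "B i h = x" if "B \<in> Bs" for B
        using \<open>\<not> (\<exists>B\<in>Bs. \<exists>B'\<in>Bs. B i h \<noteq> B' i h)\<close> that \<open>B0 \<in> Bs\<close> x_def by blast
      have "x \<in> Ms" using legal_from_Node(1) Node.prems \<open>B0 \<in> Bs\<close> x_def by blast
      have "\<forall>B\<in>Bs. legal_from (c x) B (h @ [x])"
        using legal_from_Node(2) Node.prems same by fastforce
      from Node.IH[OF rangeI this] show ?thesis
      proof (elim disjE exE conjE)
        fix r assume "\<forall>B\<in>Bs. outcome (c x) B (h @ [x]) = r"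
        then show ?thesis using same by (intro disjI1 exI[of _ r]) simp
      next
        fix u j Ms' c'
        assume "subtree (c x) u = Some (Node j Ms' c')"
          and "\<forall>B\<in>Bs. (h @ [x]) @ u \<in> path (c x) B (h @ [x])"
          and "\<exists>B\<in>Bs. \<exists>B'\<in>Bs. B j ((h @ [x]) @ u) \<noteq> B' j ((h @ [x]) @ u)"
        then show ?thesis
          using \<open>x \<in> Ms\<close> same by (intro disjI2 exI[of _ "x # u"]) auto
      qed
    qed simp
  qed
qed

definition alloc :: "'msg mech \<Rightarrow> 'msg strategy \<Rightarrow> (nat \<Rightarrow> nat \<Rightarrow> real) \<Rightarrow> nat \<Rightarrow> nat" where
  "alloc T S vs = fst (outcome T (play S vs) [])"

definition payment :: "'msg mech \<Rightarrow> 'msg strategy \<Rightarrow> (nat \<Rightarrow> nat \<Rightarrow> real) \<Rightarrow> nat \<Rightarrow> real" where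
  "payment T S vs = snd (outcome T (play S vs) [])"

lemma util_play: "util v T (play S vs) i = v (alloc T S vs i) - payment T S vs i"
  unfolding util_def alloc_def payment_def ..

lemma welfare_eq_sum_alloc: "welfare n T S vs = (\<Sum>i<n. vs i (alloc T S vs i))"
  unfolding welfare_def alloc_def ..

lemma good_mech_valid_profile:
  "good_mech n m T S \<Longrightarrow> \<forall>k<n. single_minded m (vs k) \<Longrightarrow> valid_profile n T (play S vs)"
  unfolding good_mech_def valid_strategies_def valid_profile_def play_def by simp

lemma good_mech_legal:
  assumes "good_mech n m T S" and "\<forall>k<n. single_minded m (vs k)"
  shows "legal_from T (play S vs) []"
  using assms(1) legal_from_valid_profile good_mech_valid_profile[OF assms]
  unfolding good_mech_def by blast

lemma good_mech_leaf:
  assumes "good_mech n m T S" and "\<forall>k<n. single_minded m (vs k)"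
  obtains u where "subtree T u = Some (Leaf (alloc T S vs) (payment T S vs))"
  using outcome_is_leaf[OF good_mech_legal[OF assms]] that unfolding alloc_def payment_def
  by (metis prod.collapse)

lemma good_mech_feasible:
  assumes "good_mech n m T S" and "\<forall>k<n. single_minded m (vs k)"
  shows "(\<Sum>i<n. alloc T S vs i) \<le> m"
proof -
  obtain u where "subtree T u = Some (Leaf (alloc T S vs) (payment T S vs))"
    using good_mech_leaf[OF assms] .
  moreover have "wf_mech n m T" using assms(1) unfolding good_mech_def by blast
  ultimately show ?thesis unfolding wf_mech_def by blast
qed

lemma good_mech_payment_nonneg:
  assumes "good_mech n m T S" and "\<forall>k<n. single_minded m (vs k)" and "i < n"
  shows "0 \<le> payment T S vs i"
proof -
  obtain u where "subtree T u = Some (Leaf (alloc T S vs) (payment T S vs))"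
    using good_mech_leaf[OF assms(1,2)] .
  then show ?thesis using assms(1,3) unfolding good_mech_def no_negative_transfers_def by simp
qed

lemma good_mech_payment_le_value:
  assumes "good_mech n m T S" and "\<forall>k<n. single_minded m (vs k)" and "i < n"
  shows "payment T S vs i \<le> vs i (alloc T S vs i)"
proof -
  have "indiv_rational n m T S" using assms(1) unfolding good_mech_def by blast
  then have "0 \<le> util (vs i) T (play S vs) i"
    using assms(2,3) unfolding indiv_rational_def by blast
  then show ?thesis by (simp add: util_play)
qed

lemma good_mech_osp_deviation:
  assumes "good_mech n m T S" and "owner_at T h i" and "i < n"
    and "\<forall>k<n. single_minded m (vs k)" and "\<forall>k<n. single_minded m (vs' k)"
    and "h \<in> path T (play S vs) []" and "h \<in> path T (play S vs') []"
    and "S i (vs' i) h \<noteq> S i (vs i) h"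
  shows "util (vs i) T (play S vs') i \<le> util (vs i) T (play S vs) i"
proof -
  note valid = good_mech_valid_profile[OF assms(1)]
  have "single_minded m (vs i)" using assms(3,4) by blast
  moreover have "osp n m T S" using assms(1) unfolding good_mech_def by blast
  ultimately have "util (vs i) T B' i \<le> util (vs i) T ((play S vs)(i := S i (vs i))) i"
    if "valid_profile n T B'" "h \<in> path T ((play S vs)(i := S i (vs i))) []"
      "h \<in> path T B' []" "B' i h \<noteq> S i (vs i) h" for B'
    using that assms(2,3) valid[OF assms(4)] unfolding osp_def by blast
  moreover have "(play S vs)(i := S i (vs i)) = play S vs" by (auto simp: play_def)
  ultimately show ?thesis
    using valid[OF assms(5)] assms(6-8) by (simp add: play_def)
qed

definition sm_val :: "real \<Rightarrow> nat \<Rightarrow> nat \<Rightarrow> real" where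
  "sm_val x d q = (if d \<le> q then x else 0)"

lemma single_minded_sm_val: "0 \<le> x \<Longrightarrow> 1 \<le> d \<Longrightarrow> d \<le> m \<Longrightarrow> single_minded m (sm_val x d)"
  unfolding single_minded_def sm_val_def by blast

lemma single_minded_bounds: "single_minded m v \<Longrightarrow> 0 \<le> v q \<and> v q \<le> v m"
  unfolding single_minded_def by auto

definition duo_profile :: "nat \<Rightarrow> nat \<Rightarrow> (nat \<Rightarrow> real) \<Rightarrow> (nat \<Rightarrow> real) \<Rightarrow> nat \<Rightarrow> nat \<Rightarrow> real" where
  "duo_profile i j a b k = (if k = i then a else if k = j then b else sm_val 0 1)"

lemma duo_profile_apply [simp]:
  "duo_profile i j a b i = a" "i \<noteq> j \<Longrightarrow> duo_profile i j a b j = b"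
  unfolding duo_profile_def by auto

lemma duo_profile_swap: "i \<noteq> j \<Longrightarrow> duo_profile j i b a = duo_profile i j a b"
  unfolding duo_profile_def by auto

lemma single_minded_duo_profile:
  "1 \<le> m \<Longrightarrow> single_minded m a \<Longrightarrow> single_minded m b \<Longrightarrow> single_minded m (duo_profile i j a b k)"
  unfolding duo_profile_def using single_minded_sm_val[of 0 1 m] by auto

lemma sum_duo_profile:
  assumes "i \<noteq> j" "i < n" "j < n"
  shows "(\<Sum>k<n. duo_profile i j a b k (q k)) = a (q i) + b (q j)"
proof -
  have "(\<Sum>k<n. duo_profile i j a b k (q k)) = (\<Sum>k\<in>{i, j}. duo_profile i j a b k (q k))"
    using assms by (intro sum.mono_neutral_right) (auto simp: duo_profile_def sm_val_def)
  then show ?thesis using assms by simp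
qed

lemma opt_ge:
  assumes "\<forall>k<n. single_minded m (vs k)" and "(\<Sum>k<n. q k) \<le> m"
  shows "(\<Sum>k<n. vs k (q k)) \<le> opt n m vs"
  unfolding opt_def
proof (rule cSup_upper)
  show "(\<Sum>k<n. vs k (q k)) \<in> {\<Sum>k<n. vs k (q k) |q. (\<Sum>k<n. q k) \<le> m}"
    using assms(2) by blast
  show "bdd_above {\<Sum>k<n. vs k (q k) |q. (\<Sum>k<n. q k) \<le> m}"
  proof (rule bdd_aboveI)
    fix y assume "y \<in> {\<Sum>k<n. vs k (q k) |q. (\<Sum>k<n. q k) \<le> m}"
    then obtain q' where "y = (\<Sum>k<n. vs k (q' k))" by blast
    then show "y \<le> (\<Sum>k<n. vs k m)"
      using assms(1) single_minded_bounds by (auto intro: sum_mono)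
  qed
qed

lemma welfare_bounds:
  assumes "\<forall>k<n. single_minded m (vs k)"
  shows "0 \<le> welfare n T S vs \<and> welfare n T S vs \<le> (\<Sum>k<n. vs k m)"
  using assms single_minded_bounds unfolding welfare_def by (auto intro!: sum_nonneg sum_mono)

lemma good_mech_alloc_pair_le:
  assumes "good_mech n m T S" and "\<forall>k<n. single_minded m (vs k)"
    and "i \<noteq> j" "i < n" "j < n"
  shows "alloc T S vs i + alloc T S vs j \<le> m"
proof -
  have "(\<Sum>k\<in>{i, j}. alloc T S vs k) \<le> (\<Sum>k<n. alloc T S vs k)"
    using assms(4,5) by (intro sum_mono2) auto
  then show ?thesis using good_mech_feasible[OF assms(1,2)] assms(3) by simp
qed

definition hard_profiles ::
    "nat \<Rightarrow> nat \<Rightarrow> nat \<Rightarrow> real \<Rightarrow> real \<Rightarrow> real \<Rightarrow> (nat \<Rightarrow> nat \<Rightarrow> real) list" where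
  "hard_profiles m i j \<gamma> u g =
     [duo_profile i j (sm_val 1 1) (sm_val 1 1),
      duo_profile i j (sm_val u 1) (sm_val g m),
      duo_profile i j (sm_val g m) (sm_val u 1),
      duo_profile i j (sm_val \<gamma> m) (sm_val 1 1),
      duo_profile i j (sm_val 1 1) (sm_val \<gamma> m)]"

lemma single_minded_hard_profiles:
  assumes "1 \<le> m" "0 \<le> \<gamma>" "0 \<le> u" "0 \<le> g" "P \<in> set (hard_profiles m i j \<gamma> u g)"
  shows "single_minded m (P k)"
  using assms single_minded_sm_val[of _ 1 m] single_minded_sm_val[of _ m m]
  unfolding hard_profiles_def by (auto intro!: single_minded_duo_profile)

lemma osp_divergence_impossible:
  fixes m i j :: nat and \<gamma> u g :: real
  defines "H \<equiv> set (hard_profiles m i j \<gamma> u g)"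
  assumes good: "good_mech n m T S" and m: "1 \<le> m"
    and ij: "i < n" "j < n" "i \<noteq> j" and \<gamma>u: "1 < \<gamma>" "\<gamma> < u" and g: "0 \<le> g"
    and eff1: "1 \<le> alloc T S (duo_profile i j (sm_val 1 1) (sm_val 1 1)) i"
    and eff2: "m \<le> alloc T S (duo_profile i j (sm_val u 1) (sm_val g m)) j"
    and eff3: "m \<le> alloc T S (duo_profile i j (sm_val g m) (sm_val u 1)) i"
    and eff4: "m \<le> alloc T S (duo_profile i j (sm_val \<gamma> m) (sm_val 1 1)) i"
    and node: "owner_at T h i" and on_paths: "\<forall>P\<in>H. h \<in> path T (play S P) []"
    and diverge: "\<exists>P\<in>H. \<exists>P'\<in>H. S i (P i) h \<noteq> S i (P' i) h"
  shows False
proof -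
  define Q1 where "Q1 = duo_profile i j (sm_val 1 1) (sm_val 1 1)"
  define Q2 where "Q2 = duo_profile i j (sm_val u 1) (sm_val g m)"
  define Q3 where "Q3 = duo_profile i j (sm_val g m) (sm_val u 1)"
  define Q4 where "Q4 = duo_profile i j (sm_val \<gamma> m) (sm_val 1 1)"
  have H: "H = {Q1, Q2, Q3, Q4, duo_profile i j (sm_val 1 1) (sm_val \<gamma> m)}"
    unfolding H_def hard_profiles_def Q1_def Q2_def Q3_def Q4_def by simp
  have sm: "\<forall>k<n. single_minded m (P k)" if "P \<in> H" for P
    using single_minded_hard_profiles[OF m, of \<gamma> u g] \<gamma>u g that unfolding H_def by simp
  have deviation: "util (P i) T (play S P') i \<le> util (P i) T (play S P) i"
    if "P \<in> H" "P' \<in> H" "S i (P' i) h \<noteq> S i (P i) h" for P P'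
    using good_mech_osp_deviation[OF good node ij(1) sm[OF that(1)] sm[OF that(2)]] that on_paths
    by blast
  have Q2_alloc: "alloc T S Q2 i = 0"
    using good_mech_alloc_pair_le[OF good sm, of Q2 i j] eff2 m ij unfolding H Q2_def by simp
  have Q2_util: "util (sm_val u 1) T (play S Q2) i \<le> 0"
    using good_mech_payment_nonneg[OF good sm, of Q2 i] ij
    by (simp add: H util_play Q2_alloc sm_val_def)
  have Q1_util: "0 < util (sm_val u 1) T (play S Q1) i"
    using good_mech_payment_le_value[OF good sm, of Q1 i] eff1 ij \<gamma>u
    by (simp add: H Q1_def util_play sm_val_def)
  have Q4_pay: "payment T S Q4 i \<le> \<gamma>"
    using good_mech_payment_le_value[OF good sm, of Q4 i] eff4 ij
    by (simp add: H Q4_def sm_val_def)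
  have Q4_util: "0 < util (sm_val u 1) T (play S Q4) i"
    using Q4_pay eff4 m \<gamma>u by (simp add: Q4_def util_play sm_val_def)
  have Q3_util: "util (sm_val u 1) T (play S Q3) i = u - payment T S Q3 i"
    using eff3 m by (simp add: Q3_def util_play sm_val_def)
  have Q3_pay: "payment T S Q3 i \<le> payment T S Q4 i"
    if "S i (sm_val \<gamma> m) h \<noteq> S i (sm_val g m) h"
    using deviation[of Q3 Q4] that eff3 eff4 by (simp add: H Q3_def Q4_def util_play sm_val_def)
  show False
  proof (cases "S i (sm_val u 1) h = S i (sm_val 1 1) h")
    case False
    then show False using deviation[of Q2 Q1] Q1_util Q2_util by (simp add: H Q1_def Q2_def)
  next
    case u_as_unit: True
    show False
    proof (cases "S i (sm_val \<gamma> m) h = S i (sm_val u 1) h")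
      case False
      then show False using deviation[of Q2 Q4] Q4_util Q2_util by (simp add: H Q2_def Q4_def)
    next
      case True
      then have "S i (sm_val g m) h \<noteq> S i (sm_val u 1) h"
        using diverge u_as_unit ij by (auto simp: H Q1_def Q2_def Q3_def Q4_def)
      then show False
        using deviation[of Q2 Q3] Q3_pay True Q4_pay Q3_util Q2_util \<gamma>u
        by (simp add: H Q2_def Q3_def)
    qed
  qed
qed

lemma good_mech_misallocates_hard_profile:
  fixes \<gamma> u g :: real
  assumes good: "good_mech n m T S" and m: "1 \<le> m" and n: "2 \<le> n"
    and \<gamma>u: "1 < \<gamma>" "\<gamma> < u" and g: "0 \<le> g"
  shows "\<not> (1 \<le> alloc T S (duo_profile 0 1 (sm_val 1 1) (sm_val 1 1)) 0 \<and>
             1 \<le> alloc T S (duo_profile 0 1 (sm_val 1 1) (sm_val 1 1)) 1 \<and>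
             m \<le> alloc T S (duo_profile 0 1 (sm_val u 1) (sm_val g m)) 1 \<and>
             m \<le> alloc T S (duo_profile 0 1 (sm_val g m) (sm_val u 1)) 0 \<and>
             m \<le> alloc T S (duo_profile 0 1 (sm_val \<gamma> m) (sm_val 1 1)) 0 \<and>
             m \<le> alloc T S (duo_profile 0 1 (sm_val 1 1) (sm_val \<gamma> m)) 1)"
    (is "\<not> (?e1 \<and> ?e1' \<and> ?e2 \<and> ?e3 \<and> ?e4 \<and> ?e5)")
proof
  assume eff: "?e1 \<and> ?e1' \<and> ?e2 \<and> ?e3 \<and> ?e4 \<and> ?e5"
  define H where "H = set (hard_profiles m 0 1 \<gamma> u g)"
  have sm: "\<forall>k<n. single_minded m (P k)" if "P \<in> H" for P
    using single_minded_hard_profiles[OF m, of \<gamma> u g] \<gamma>u g that unfolding H_def by simp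
  have "\<forall>B\<in>play S ` H. legal_from T B []"
    using good_mech_legal[OF good sm] by blast
  from common_outcome_or_divergence[OF this] show False
  proof (elim disjE exE conjE)
    fix r assume "\<forall>B\<in>play S ` H. outcome T B [] = r"
    then have "alloc T S (duo_profile 0 1 (sm_val g m) (sm_val u 1)) =
        alloc T S (duo_profile 0 1 (sm_val u 1) (sm_val g m))"
      unfolding H_def hard_profiles_def alloc_def by simp
    then show False
      using good_mech_alloc_pair_le[OF good sm, of "duo_profile 0 1 (sm_val u 1) (sm_val g m)" 0 1]
        eff m n
      by (simp add: H_def hard_profiles_def)
  next
    fix h b Ms c
    assume node: "subtree T h = Some (Node b Ms c)"
      and on_paths: "\<forall>B\<in>play S ` H. [] @ h \<in> path T B []"
      and diverge: "\<exists>B\<in>play S ` H. \<exists>B'\<in>play S ` H. B b ([] @ h) \<noteq> B' b ([] @ h)"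
    have "b < n" using good node unfolding good_mech_def wf_mech_def by blast
    have owner: "owner_at T h b" using node unfolding owner_at_def by blast
    have on_paths': "\<forall>P\<in>H. h \<in> path T (play S P) []" using on_paths by simp
    have diverge': "\<exists>P\<in>H. \<exists>P'\<in>H. S b (P b) h \<noteq> S b (P' b) h"
      using diverge by (auto simp: play_def)
    consider "b = 0" | "b = 1" | "2 \<le> b" by linarith
    then show False
    proof cases
      case 1
      then show False
        using osp_divergence_impossible[OF good m _ _ _ \<gamma>u g, of 0 1] eff n owner on_paths'
          diverge'
        unfolding H_def by simp
    next
      case 2
      have swap: "duo_profile 1 0 b a = duo_profile 0 1 a b" for a b :: "nat \<Rightarrow> real"
        by (rule duo_profile_swap) simp
      have H_swap: "set (hard_profiles m 1 0 \<gamma> u g) = H"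
        unfolding H_def hard_profiles_def swap by auto
      show False
        using osp_divergence_impossible[OF good m _ _ _ \<gamma>u g, of 1 0, unfolded swap H_swap]
          eff n owner on_paths' diverge' 2
        by simp
    next
      case 3
      then have "P b = sm_val 0 1" if "P \<in> H" for P
        using that unfolding H_def hard_profiles_def duo_profile_def by auto
      then show False using diverge' by auto
    qed
  qed
qed

definition hard_optima :: "real \<Rightarrow> real \<Rightarrow> real list" where
  "hard_optima \<gamma> g = [2, g, g, \<gamma>, \<gamma>]"

lemma welfare_duo_profile:
  "2 \<le> n \<Longrightarrow> welfare n T S (duo_profile 0 1 a b) =
     a (alloc T S (duo_profile 0 1 a b) 0) + b (alloc T S (duo_profile 0 1 a b) 1)"
  unfolding welfare_eq_sum_alloc by (rule sum_duo_profile) auto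

lemma welfare_hard_profiles:
  fixes \<gamma> u g :: real
  assumes good: "good_mech n m T S" and m: "1 \<le> m" and n: "2 \<le> n"
    and \<gamma>u: "1 < \<gamma>" "\<gamma> < u" and ug: "u \<le> g"
  defines "W k \<equiv> welfare n T S (hard_profiles m 0 1 \<gamma> u g ! k)"
  shows "\<forall>k<5. 0 \<le> W k \<and> W k \<le> hard_optima \<gamma> g ! k"
    and "W 0 \<le> 1 \<or> W 1 \<le> u \<or> W 2 \<le> u \<or> W 3 \<le> 1 \<or> W 4 \<le> 1"
proof -
  have sm: "\<forall>i<n. single_minded m (P i)" if "P \<in> set (hard_profiles m 0 1 \<gamma> u g)" for P
    using single_minded_hard_profiles[OF m, of \<gamma> u g] \<gamma>u ug that by simp
  have feasible: "alloc T S P 0 + alloc T S P 1 \<le> m"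
    if "P \<in> set (hard_profiles m 0 1 \<gamma> u g)" for P
    using good_mech_alloc_pair_le[OF good sm[OF that], of 0 1] n by simp
  define f where "f k = alloc T S (hard_profiles m 0 1 \<gamma> u g ! k)" for k
  have feasible_f: "f k 0 + f k 1 \<le> m" if "k < 5" for k
    unfolding f_def using feasible nth_mem[of k "hard_profiles m 0 1 \<gamma> u g"] that
    by (simp add: hard_profiles_def)
  have W: "W 0 = sm_val 1 1 (f 0 0) + sm_val 1 1 (f 0 1)"
    "W 1 = sm_val u 1 (f 1 0) + sm_val g m (f 1 1)"
    "W 2 = sm_val g m (f 2 0) + sm_val u 1 (f 2 1)"
    "W 3 = sm_val \<gamma> m (f 3 0) + sm_val 1 1 (f 3 1)"
    "W 4 = sm_val 1 1 (f 4 0) + sm_val \<gamma> m (f 4 1)"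
    unfolding W_def f_def by (simp_all add: hard_profiles_def welfare_duo_profile[OF n, simplified])
  have k5: "k < 5 \<longleftrightarrow> k = 0 \<or> k = 1 \<or> k = 2 \<or> k = 3 \<or> k = 4" for k :: nat
    by auto
  show "\<forall>k<5. 0 \<le> W k \<and> W k \<le> hard_optima \<gamma> g ! k"
    unfolding k5 using W feasible_f[of 1] feasible_f[of 2] feasible_f[of 3] feasible_f[of 4]
      m \<gamma>u ug
    by (auto simp: hard_optima_def sm_val_def)
  show "W 0 \<le> 1 \<or> W 1 \<le> u \<or> W 2 \<le> u \<or> W 3 \<le> 1 \<or> W 4 \<le> 1"
    using good_mech_misallocates_hard_profile[OF good m n \<gamma>u] W \<gamma>u ug
    unfolding f_def by (auto simp: hard_profiles_def sm_val_def)
qed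

(* Missing the optimum on the first profile costs (1/3) (1/2) of the weighted sum, on any
   other one at least (1/6) (1 - 1/K). *)
definition hard_weights :: "real list" where
  "hard_weights = [1/3, 1/6, 1/6, 1/6, 1/6]"

lemma hard_weighted_ratio_le:
  fixes K :: real and W :: "nat \<Rightarrow> real"
  assumes K: "1 < K"
    and bounds: "\<forall>k<5. 0 \<le> W k \<and> W k \<le> hard_optima K (K * (K + 1)) ! k"
    and loss: "W 0 \<le> 1 \<or> W 1 \<le> K + 1 \<or> W 2 \<le> K + 1 \<or> W 3 \<le> 1 \<or> W 4 \<le> 1"
  shows "(\<Sum>k<5. hard_weights ! k * (W k / hard_optima K (K * (K + 1)) ! k)) \<le> 5/6 + 1/(6*K)"
proof -
  define r where "r k = W k / hard_optima K (K * (K + 1)) ! k" for k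
  have K0: "0 < K" "0 < K * (K + 1)" using K by auto
  have "r k \<le> 1" if "k < 5" for k
    using bounds that K0 unfolding r_def by (auto simp: divide_le_eq_1)
  then have r_le_1: "r 0 \<le> 1" "r 1 \<le> 1" "r 2 \<le> 1" "r 3 \<le> 1" "r 4 \<le> 1"
    by simp_all
  define t where "t = 1 / K"
  have "r 1 \<le> t" if "W 1 \<le> K + 1"
    using that K0 unfolding r_def t_def by (simp add: hard_optima_def divide_simps)
  moreover have "r 2 \<le> t" if "W 2 \<le> K + 1"
    using that K0 unfolding r_def t_def by (simp add: hard_optima_def divide_simps)
  moreover have "r 3 \<le> t" if "W 3 \<le> 1"
    using that K0 unfolding r_def t_def by (simp add: hard_optima_def divide_simps)
  moreover have "r 4 \<le> t" if "W 4 \<le> 1"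
    using that K0 unfolding r_def t_def by (simp add: hard_optima_def divide_simps)
  moreover have "r 0 \<le> 1 / 2" if "W 0 \<le> 1"
    using that unfolding r_def by (simp add: hard_optima_def)
  ultimately have "r 0 \<le> 1/2 \<or> r 1 \<le> t \<or> r 2 \<le> t \<or> r 3 \<le> t \<or> r 4 \<le> t"
    using loss by blast
  moreover have "0 \<le> t" using K0 unfolding t_def by simp
  ultimately have "r 0 / 3 + (r 1 + r 2 + r 3 + r 4) / 6 \<le> 5/6 + t/6"
    using r_le_1 by (elim disjE) argo+
  moreover have "(\<Sum>k<5. hard_weights ! k * r k) = r 0 / 3 + (r 1 + r 2 + r 3 + r 4) / 6"
    by (simp add: hard_weights_def eval_nat_numeral)
  moreover have "t / 6 = 1 / (6 * K)" unfolding t_def by simp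
  ultimately show ?thesis unfolding r_def by simp
qed

lemma (in prob_space) exists_expectation_le_of_convex_combination_le:
  fixes X :: "'i \<Rightarrow> 'a \<Rightarrow> real" and w :: "'i \<Rightarrow> real"
  assumes "finite I" and integrable: "\<And>k. k \<in> I \<Longrightarrow> integrable M (X k)"
    and w: "\<And>k. k \<in> I \<Longrightarrow> 0 \<le> w k" "(\<Sum>k\<in>I. w k) = 1"
    and "AE z in M. (\<Sum>k\<in>I. w k * X k z) \<le> \<beta>"
  shows "\<exists>k\<in>I. expectation (X k) \<le> \<beta>"
proof (rule ccontr)
  assume "\<not> (\<exists>k\<in>I. expectation (X k) \<le> \<beta>)"
  then have gt: "\<beta> < expectation (X k)" if "k \<in> I" for k
    using that by (auto simp: not_le)
  have "\<exists>k0\<in>I. 0 < w k0"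
  proof (rule ccontr)
    assume "\<not> (\<exists>k0\<in>I. 0 < w k0)"
    then have "(\<Sum>k\<in>I. w k) \<le> 0" by (intro sum_nonpos) (auto simp: not_less)
    then show False using w(2) by simp
  qed
  then obtain k0 where "k0 \<in> I" "0 < w k0" by blast
  have "0 < (\<Sum>k\<in>I. w k * (expectation (X k) - \<beta>))"
  proof (rule sum_pos2[OF \<open>finite I\<close> \<open>k0 \<in> I\<close>])
    show "0 < w k0 * (expectation (X k0) - \<beta>)"
      using \<open>0 < w k0\<close> gt[OF \<open>k0 \<in> I\<close>] by simp
    show "0 \<le> w k * (expectation (X k) - \<beta>)" if "k \<in> I" for k
      using w(1)[OF that] gt[OF that] by simp
  qed
  also have "\<dots> = (\<Sum>k\<in>I. w k * expectation (X k)) - \<beta>"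
    using w(2) by (simp add: right_diff_distrib sum_subtractf flip: sum_distrib_right)
  also have "(\<Sum>k\<in>I. w k * expectation (X k)) = expectation (\<lambda>z. \<Sum>k\<in>I. w k * X k z)"
    using integrable by (simp add: integral_sum)
  also have "\<dots> \<le> expectation (\<lambda>z. \<beta>)"
    using integrable assms(5) by (intro integral_mono_AE) auto
  finally show False by (simp add: prob_space)
qed

lemma opt_duo_profile_ge:
  assumes "i \<noteq> j" "i < n" "j < n" "1 \<le> m" "single_minded m a" "single_minded m b"
    and "qi + qj \<le> m"
  shows "a qi + b qj \<le> opt n m (duo_profile i j a b)"
proof -
  define q where "q k = (if k = i then qi else if k = j then qj else 0)" for k
  have "(\<Sum>k<n. q k) = (\<Sum>k\<in>{i, j}. q k)"
    using assms(2,3) by (intro sum.mono_neutral_right) (auto simp: q_def)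
  then have "(\<Sum>k<n. q k) \<le> m" using assms(1,7) by (simp add: q_def)
  then have "(\<Sum>k<n. duo_profile i j a b k (q k)) \<le> opt n m (duo_profile i j a b)"
    using assms(4-6) by (intro opt_ge) (simp add: single_minded_duo_profile)
  then show ?thesis using assms(1-3) by (simp add: sum_duo_profile q_def)
qed

lemma opt_hard_profiles:
  assumes m: "2 \<le> m" and n: "2 \<le> n" and "0 \<le> \<gamma>" "0 \<le> u" "0 \<le> g" and "k < 5"
  shows "hard_optima \<gamma> g ! k \<le> opt n m (hard_profiles m 0 1 \<gamma> u g ! k)"
proof -
  have sm: "single_minded m (sm_val x 1)" "single_minded m (sm_val x m)" if "0 \<le> x" for x
    using that m by (auto intro: single_minded_sm_val)
  have opt: "a q0 + b q1 \<le> opt n m (duo_profile 0 1 a b)"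
    if "single_minded m a" "single_minded m b" "q0 + q1 \<le> m" for a b q0 q1
    using opt_duo_profile_ge[of 0 1 n m a b q0 q1] that m n by simp
  have "k = 0 \<or> k = 1 \<or> k = 2 \<or> k = 3 \<or> k = 4"
    using \<open>k < 5\<close> by (simp add: less_Suc_eq numeral_nat)
  then show ?thesis
  proof (elim disjE)
    assume "k = 0"
    then show ?thesis using opt[of "sm_val 1 1" "sm_val 1 1" 1 1] sm[of 1] m
      by (simp add: hard_profiles_def hard_optima_def sm_val_def)
  next
    assume "k = 1"
    then show ?thesis using opt[of "sm_val u 1" "sm_val g m" 0 m] sm assms(4,5)
      by (simp add: hard_profiles_def hard_optima_def sm_val_def)
  next
    assume "k = 2"
    then show ?thesis using opt[of "sm_val g m" "sm_val u 1" m 0] sm assms(4,5)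
      by (simp add: hard_profiles_def hard_optima_def sm_val_def)
  next
    assume "k = 3"
    then show ?thesis using opt[of "sm_val \<gamma> m" "sm_val 1 1" m 0] sm assms(3)
      by (simp add: hard_profiles_def hard_optima_def sm_val_def)
  next
    assume "k = 4"
    then show ?thesis using opt[of "sm_val 1 1" "sm_val \<gamma> m" 0 m] sm assms(3)
      by (simp add: hard_profiles_def hard_optima_def sm_val_def)
  qed
qed

lemma good_mech_hard_weighted_welfare_le:
  assumes "good_mech n m T S" and "1 \<le> m" and "2 \<le> n" and K: "1 < K"
  shows "(\<Sum>k<5. hard_weights ! k * (welfare n T S (hard_profiles m 0 1 K (K + 1) (K * (K + 1)) ! k)
            / hard_optima K (K * (K + 1)) ! k)) \<le> 5/6 + 1/(6*K)"
  using welfare_hard_profiles[OF assms(1-3) K, of "K + 1" "K * (K + 1)"] K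
  by (intro hard_weighted_ratio_le K) auto

lemma integrable_welfare:
  fixes M :: "('msg mech \<times> 'msg strategy) measure"
  assumes "finite_measure M" and "\<forall>i<n. single_minded m (vs i)"
    and "(\<lambda>z. welfare n (fst z) (snd z) vs) \<in> borel_measurable M"
  shows "integrable M (\<lambda>z. welfare n (fst z) (snd z) vs)"
proof (rule finite_measure.integrable_const_bound[OF assms(1)])
  have "norm (welfare n T S vs) \<le> (\<Sum>i<n. vs i m)" for T S
    using welfare_bounds[OF assms(2), of T S] by simp
  then show "AE z in M. norm (welfare n (fst z) (snd z) vs) \<le> (\<Sum>i<n. vs i m)"
    by (intro AE_I2) simp
qed fact

lemma exists_hard_profile_low_expected_welfare:
  fixes M :: "('msg mech \<times> 'msg strategy) measure" and K :: real
  assumes "prob_space M" and good: "AE z in M. good_mech n m (fst z) (snd z)"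
    and meas: "\<forall>vs. (\<forall>i<n. single_minded m (vs i)) \<longrightarrow>
                 (\<lambda>z. welfare n (fst z) (snd z) vs) \<in> borel_measurable M"
    and m: "2 \<le> m" and n: "2 \<le> n" and K: "1 < K"
  shows "\<exists>vs\<in>set (hard_profiles m 0 1 K (K + 1) (K * (K + 1))). 0 < opt n m vs \<and>
           (\<integral>z. welfare n (fst z) (snd z) vs \<partial>M) \<le> (5/6 + 1/(6*K)) * opt n m vs"
proof -
  interpret prob_space M by fact
  define Q where "Q = hard_profiles m 0 1 K (K + 1) (K * (K + 1))"
  define v where "v = hard_optima K (K * (K + 1))"
  define W where "W k z = welfare n (fst z) (snd z) (Q ! k)"
    for k and z :: "'msg mech \<times> 'msg strategy"
  have "length Q = 5" by (simp add: Q_def hard_profiles_def)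
  then have Q_nth: "Q ! k \<in> set Q" if "k < 5" for k
    using that by simp
  have sm: "\<forall>i<n. single_minded m ((Q ! k) i)" if "k < 5" for k
    using single_minded_hard_profiles[of m K "K + 1" "K * (K + 1)"] Q_nth[OF that] m K
    unfolding Q_def by simp
  have v_pos: "0 < v ! k" if "k < 5" for k
    using that K by (auto simp: v_def hard_optima_def less_Suc_eq numeral_nat)
  have "\<exists>k\<in>{..<5}. expectation (\<lambda>z. W k z / v ! k) \<le> 5/6 + 1/(6*K)"
  proof (rule exists_expectation_le_of_convex_combination_le)
    show "integrable M (\<lambda>z. W k z / v ! k)" if "k \<in> {..<5}" for k
      using integrable_welfare[OF finite_measure_axioms sm] meas sm that unfolding W_def by simp
    show "0 \<le> hard_weights ! k" if "k \<in> {..<5}" for k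
      using that by (auto simp: hard_weights_def less_Suc_eq numeral_nat)
    show "(\<Sum>k<5. hard_weights ! k) = 1"
      by (simp add: hard_weights_def eval_nat_numeral)
    show "AE z in M. (\<Sum>k<5. hard_weights ! k * (W k z / v ! k)) \<le> 5/6 + 1/(6*K)"
      using good
    proof (rule eventually_mono)
      fix z :: "'msg mech \<times> 'msg strategy" assume "good_mech n m (fst z) (snd z)"
      from good_mech_hard_weighted_welfare_le[OF this _ n K] m
      show "(\<Sum>k<5. hard_weights ! k * (W k z / v ! k)) \<le> 5/6 + 1/(6*K)"
        unfolding W_def Q_def v_def by simp
    qed
  qed simp
  then obtain k where k: "k < 5" and "expectation (\<lambda>z. W k z / v ! k) \<le> 5/6 + 1/(6*K)"
    by blast
  then have "expectation (W k) \<le> (5/6 + 1/(6*K)) * v ! k"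
    using v_pos[OF k] by (simp add: divide_le_eq)
  also have "\<dots> \<le> (5/6 + 1/(6*K)) * opt n m (Q ! k)"
    using opt_hard_profiles[OF m n, of K "K + 1" "K * (K + 1)" k] k K
    by (intro mult_left_mono) (auto simp: Q_def v_def)
  finally show ?thesis
    using Q_nth[OF k] v_pos[OF k] opt_hard_profiles[OF m n, of K "K + 1" "K * (K + 1)" k] k K
    unfolding W_def Q_def v_def by (intro bexI[of _ "Q ! k"]) (auto simp: Q_def)
qed

theorem theorem3p6:
  fixes M :: "('msg mech \<times> 'msg strategy) measure" and n m :: nat
  assumes "m \<ge> 2" and "n \<ge> 2" and "prob_space M"
    and "AE z in M. good_mech n m (fst z) (snd z)"
    and "\<forall>vs. (\<forall>i<n. single_minded m (vs i)) \<longrightarrow>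
           (\<lambda>z. welfare n (fst z) (snd z) vs) \<in> borel_measurable M"
  shows "\<forall>c < 6/5. \<exists>vs. (\<forall>i<n. single_minded m (vs i)) \<and>
           c * (\<integral>z. welfare n (fst z) (snd z) vs \<partial>M) < opt n m vs"
proof (intro allI impI)
  fix c :: real assume "c < 6/5"
  define K where "K = 1 + 2 / (6 - 5 * c)"
  define \<beta> where "\<beta> = 5/6 + 1/(6*K)"
  have K: "1 < K" using \<open>c < 6/5\<close> by (simp add: K_def)
  have "K * (6 - 5 * c) = 8 - 5 * c" using \<open>c < 6/5\<close> by (simp add: K_def field_simps)
  then have "c * (5 * K + 1) < 6 * K" using \<open>c < 6/5\<close> by (simp add: algebra_simps)
  then have c\<beta>: "c * \<beta> < 1" using K by (simp add: \<beta>_def field_simps)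
  obtain vs where "vs \<in> set (hard_profiles m 0 1 K (K + 1) (K * (K + 1)))"
    and opt: "0 < opt n m vs" and low: "(\<integral>z. welfare n (fst z) (snd z) vs \<partial>M) \<le> \<beta> * opt n m vs"
    using exists_hard_profile_low_expected_welfare[OF assms(3-5,1,2) K] unfolding \<beta>_def by blast
  then have sm: "\<forall>i<n. single_minded m (vs i)"
    using single_minded_hard_profiles[of m K "K + 1" "K * (K + 1)"] assms(1) K by simp
  have "c * (\<integral>z. welfare n (fst z) (snd z) vs \<partial>M) < opt n m vs"
  proof (cases "c \<le> 0")
    case True
    have "0 \<le> (\<integral>z. welfare n (fst z) (snd z) vs \<partial>M)"
      using welfare_bounds[OF sm] by (intro integral_nonneg_AE AE_I2) blast
    with True opt show ?thesis by (smt (verit) mult_nonpos_nonneg)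
  next
    case False
    then have "c * (\<integral>z. welfare n (fst z) (snd z) vs \<partial>M) \<le> (c * \<beta>) * opt n m vs"
      using low by (simp add: mult.assoc)
    also have "\<dots> < opt n m vs" using c\<beta> opt by simp
    finally show ?thesis .
  qed
  with sm show "\<exists>vs. (\<forall>i<n. single_minded m (vs i)) \<and>
      c * (\<integral>z. welfare n (fst z) (snd z) vs \<partial>M) < opt n m vs" by blast
qed

end
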